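(* Let $X$ be a real Banach space, $F$ a non-empty closed bounded subset of $X$, and $x\in X$ with $Q_F(x)\neq\emptyset$. The following are equivalent. (1) Every maximizing sequence in $F$ for $x$ converges. (2) $\mathrm{diam}(Q_F(x,\frac1n))\to0$. (3) $Q_F(x)$ is a singleton and $Q_F(x,\frac1n)\xrightarrow{V}Q_F(x)$. (4) $Q_F(x)$ is a singleton and $Q_F(x,\frac1n)\xrightarrow{H}Q_F(x)$. (5) $F$ is SUR at $x$.
   Context: $B_X$ is the closed unit ball. $r(F,x)=\sup_{y\in F}\|x-y\|$, $Q_F(x,\delta)=\{y\in F:\|x-y\|\ge r(F,x)-\delta\}$ for $\delta\ge0$, $Q_F(x)=Q_F(x,0)$. A maximizing sequence in $F$ for $x$ is a sequence $(y_n)$ in $F$ with $\|x-y_n\|\to r(F,x)$. $F$ is SUR at $x$ if $Q_F(x)$ is a singleton and for every $\epsilon>0$ there is $\delta>0$ with $Q_F(x,\delta)\subseteq Q_F(x)+\epsilon B_X$. For closed bounded sets $C_n,C_0$: $C_n\xrightarrow{V}C_0$ means both (a) for every open $U\supseteq C_0$, eventually $C_n\subseteq U$, and (b) for every open $U$ with $C_0\cap U\ne\emptyset$, eventually $C_n\cap U\neq\emptyset$; $C_n\xrightarrow{H}C_0$ means for every $\epsilon>0$, eventually $C_n\subseteq C_0+\epsilon B_X$ and $C_0\subseteq C_n+\epsilon B_X$. *)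

theory Defs
  imports "HOL-Analysis.Analysis"
begin

definition far_rad :: "'a::real_normed_vector set \<Rightarrow> 'a \<Rightarrow> real" where
  "far_rad F x = (SUP y\<in>F. norm (x - y))"

definition farQ :: "'a::real_normed_vector set \<Rightarrow> 'a \<Rightarrow> real \<Rightarrow> 'a set" where
  "farQ F x \<delta> = {y \<in> F. norm (x - y) \<ge> far_rad F x - \<delta>}"

definition maximizing_seq :: "'a::real_normed_vector set \<Rightarrow> 'a \<Rightarrow> (nat \<Rightarrow> 'a) \<Rightarrow> bool" where
  "maximizing_seq F x y \<longleftrightarrow> (\<forall>n. y n \<in> F) \<and> ((\<lambda>n. norm (x - y n)) \<longlonglongrightarrow> far_rad F x)"

definition set_thicken :: "'a::real_normed_vector set \<Rightarrow> real \<Rightarrow> 'a set" where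
  "set_thicken A \<epsilon> = {a + b | a b. a \<in> A \<and> norm b \<le> \<epsilon>}"

definition SUR_at :: "'a::real_normed_vector set \<Rightarrow> 'a \<Rightarrow> bool" where
  "SUR_at F x \<longleftrightarrow> (\<exists>y. farQ F x 0 = {y}) \<and>
     (\<forall>\<epsilon>>0. \<exists>\<delta>>0. farQ F x \<delta> \<subseteq> set_thicken (farQ F x 0) \<epsilon>)"

definition vietoris_conv :: "(nat \<Rightarrow> 'a::real_normed_vector set) \<Rightarrow> 'a set \<Rightarrow> bool" where
  "vietoris_conv C C0 \<longleftrightarrow>
     (\<forall>U. open U \<and> C0 \<subseteq> U \<longrightarrow> (\<forall>\<^sub>F n in sequentially. C n \<subseteq> U)) \<and>
     (\<forall>U. open U \<and> C0 \<inter> U \<noteq> {} \<longrightarrow> (\<forall>\<^sub>F n in sequentially. C n \<inter> U \<noteq> {}))"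

definition hausdorff_conv :: "(nat \<Rightarrow> 'a::real_normed_vector set) \<Rightarrow> 'a set \<Rightarrow> bool" where
  "hausdorff_conv C C0 \<longleftrightarrow>
     (\<forall>\<epsilon>>0. \<forall>\<^sub>F n in sequentially. C n \<subseteq> set_thicken C0 \<epsilon> \<and> C0 \<subseteq> set_thicken (C n) \<epsilon>)"

end

theory Submission
  imports Defs
begin

text \<open>All five conditions say that the sets \<open>Q\<^sub>F(x,\<delta>)\<close> collapse onto one point \<open>q\<close> as
  \<open>\<delta> \<down> 0\<close>: every ball around \<open>q\<close> contains some \<open>Q\<^sub>F(x,\<delta>)\<close>. Since all \<open>Q\<^sub>F(x,1/n)\<close> contain
  \<open>q \<in> Q\<^sub>F(x)\<close>, Hausdorff and Vietoris convergence to \<open>{q}\<close> and vanishing diameters are each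
  the same as this collapse. A sequence in \<open>F\<close> is maximizing iff it eventually enters every
  \<open>Q\<^sub>F(x,\<delta>)\<close>, so the collapse means that all maximizing sequences tend to \<open>q\<close>; and if all
  maximizing sequences merely converge, then each of them tends to \<open>q\<close>, because interleaving
  it with the constant maximizing sequence \<open>q\<close> yields a convergent sequence.\<close>

definition shrinks_to :: "(nat \<Rightarrow> 'a::metric_space set) \<Rightarrow> 'a \<Rightarrow> bool" where
  "shrinks_to C q \<longleftrightarrow> (\<forall>e>0. \<forall>\<^sub>F n in sequentially. C n \<subseteq> cball q e)"

lemma set_thicken_singleton: "set_thicken {q} e = cball q e"
proof
  show "set_thicken {q} e \<subseteq> cball q e"
    unfolding set_thicken_def by (auto simp: dist_norm)
  show "cball q e \<subseteq> set_thicken {q} e"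
  proof
    fix y assume "y \<in> cball q e"
    then have "y = q + (y - q)" "norm (y - q) \<le> e"
      by (simp_all add: dist_norm norm_minus_commute)
    then show "y \<in> set_thicken {q} e" unfolding set_thicken_def by blast
  qed
qed

lemma subset_set_thicken: "0 \<le> e \<Longrightarrow> A \<subseteq> set_thicken A e"
  unfolding set_thicken_def by force

lemma hausdorff_conv_singleton_iff:
  assumes "\<And>n. q \<in> C n"
  shows "hausdorff_conv C {q} \<longleftrightarrow> shrinks_to C q"
proof -
  have "q \<in> set_thicken (C n) e" if "e > 0" for n e
    using assms subset_set_thicken[of e "C n"] that by auto
  then show ?thesis
    unfolding hausdorff_conv_def shrinks_to_def set_thicken_singleton by simp
qed

lemma vietoris_conv_singleton_iff:
  assumes "\<And>n. q \<in> C n"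
  shows "vietoris_conv C {q} \<longleftrightarrow> shrinks_to C q"
proof
  assume "vietoris_conv C {q}"
  then have upper: "\<forall>\<^sub>F n in sequentially. C n \<subseteq> U" if "open U" "q \<in> U" for U
    using that unfolding vietoris_conv_def by simp
  show "shrinks_to C q" unfolding shrinks_to_def
  proof (intro allI impI)
    fix e :: real assume "e > 0"
    then have "\<forall>\<^sub>F n in sequentially. C n \<subseteq> ball q e" by (intro upper) auto
    then show "\<forall>\<^sub>F n in sequentially. C n \<subseteq> cball q e"
      by eventually_elim (use ball_subset_cball in blast)
  qed
next
  assume shrink: "shrinks_to C q"
  have "\<forall>\<^sub>F n in sequentially. C n \<subseteq> U" if "open U" "q \<in> U" for U
  proof -
    obtain e where "e > 0" "ball q e \<subseteq> U" using \<open>open U\<close> \<open>q \<in> U\<close> openE by blast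
    then have "cball q (e / 2) \<subseteq> U" by (auto simp: subset_eq)
    have "\<forall>\<^sub>F n in sequentially. C n \<subseteq> cball q (e / 2)"
      using shrink \<open>e > 0\<close> unfolding shrinks_to_def by simp
    then show ?thesis
      by eventually_elim (use \<open>cball q (e / 2) \<subseteq> U\<close> in blast)
  qed
  moreover have "\<forall>\<^sub>F n in sequentially. C n \<inter> U \<noteq> {}" if "q \<in> U" for U
    using assms that by (intro always_eventually) blast
  ultimately show "vietoris_conv C {q}"
    unfolding vietoris_conv_def by simp
qed

lemma diameter_tendsto_zero_iff_shrinks_to:
  fixes C :: "nat \<Rightarrow> 'a::real_normed_vector set"
  assumes "\<And>n. q \<in> C n" and "\<And>n. bounded (C n)"
  shows "(\<lambda>n. diameter (C n)) \<longlonglongrightarrow> 0 \<longleftrightarrow> shrinks_to C q"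
proof
  assume lim: "(\<lambda>n. diameter (C n)) \<longlonglongrightarrow> 0"
  show "shrinks_to C q" unfolding shrinks_to_def
  proof (intro allI impI)
    fix e :: real assume "e > 0"
    with lim have "\<forall>\<^sub>F n in sequentially. diameter (C n) < e"
      by (rule order_tendstoD)
    then show "\<forall>\<^sub>F n in sequentially. C n \<subseteq> cball q e"
      by eventually_elim (use assms diameter_bounded_bound in fastforce)
  qed
next
  assume shrink: "shrinks_to C q"
  have "\<forall>\<^sub>F n in sequentially. dist (diameter (C n)) 0 < e" if "e > 0" for e
  proof -
    have "\<forall>\<^sub>F n in sequentially. C n \<subseteq> cball q (e / 3)"
      using shrink \<open>e > 0\<close> unfolding shrinks_to_def by simp
    then show ?thesis
    proof eventually_elim
      case (elim n)
      have "norm (y - z) \<le> 2 * (e / 3)" if "y \<in> C n" "z \<in> C n" for y z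
      proof -
        have "dist q y \<le> e / 3" "dist q z \<le> e / 3" using elim that by auto
        then show ?thesis using dist_triangle3[of y z q] by (simp add: dist_norm)
      qed
      then have "diameter (C n) \<le> 2 * (e / 3)"
        using \<open>e > 0\<close> by (intro diameter_le) auto
      then show ?case using diameter_ge_0[OF assms(2)] \<open>e > 0\<close> by simp
    qed
  qed
  then show "(\<lambda>n. diameter (C n)) \<longlonglongrightarrow> 0" unfolding tendsto_iff by blast
qed

lemma shrinks_to_mono_family_iff:
  fixes Q :: "real \<Rightarrow> 'a::metric_space set"
  assumes "mono Q"
  shows "shrinks_to (\<lambda>n. Q (1 / real n)) q \<longleftrightarrow> (\<forall>e>0. \<exists>d>0. Q d \<subseteq> cball q e)"
proof
  assume shrink: "shrinks_to (\<lambda>n. Q (1 / real n)) q"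
  show "\<forall>e>0. \<exists>d>0. Q d \<subseteq> cball q e"
  proof (intro allI impI)
    fix e :: real assume "e > 0"
    with shrink have "\<forall>\<^sub>F n in sequentially. Q (1 / real n) \<subseteq> cball q e"
      unfolding shrinks_to_def by simp
    moreover have "\<forall>\<^sub>F n in sequentially. n \<ge> 1" by (rule eventually_ge_at_top)
    ultimately have "\<forall>\<^sub>F n in sequentially. Q (1 / real n) \<subseteq> cball q e \<and> n \<ge> 1"
      by (rule eventually_conj)
    then obtain n :: nat where "Q (1 / real n) \<subseteq> cball q e" "n \<ge> 1"
      using eventually_happens'[OF trivial_limit_sequentially] by blast
    then show "\<exists>d>0. Q d \<subseteq> cball q e" by (intro exI[of _ "1 / real n"]) auto
  qed
next
  assume small: "\<forall>e>0. \<exists>d>0. Q d \<subseteq> cball q e"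
  show "shrinks_to (\<lambda>n. Q (1 / real n)) q" unfolding shrinks_to_def
  proof (intro allI impI)
    fix e :: real assume "e > 0"
    then obtain d where "d > 0" "Q d \<subseteq> cball q e" using small by blast
    from lim_inverse_n' \<open>d > 0\<close> have "\<forall>\<^sub>F n in sequentially. 1 / real n < d"
      by (rule order_tendstoD)
    then show "\<forall>\<^sub>F n in sequentially. Q (1 / real n) \<subseteq> cball q e"
    proof eventually_elim
      case (elim n)
      then have "Q (1 / real n) \<subseteq> Q d" using monoD[OF assms] by simp
      with \<open>Q d \<subseteq> cball q e\<close> show ?case by blast
    qed
  qed
qed

lemma mono_family_shrinks_imp_subset_singleton:
  fixes Q :: "real \<Rightarrow> 'a::metric_space set"
  assumes "mono Q" and "\<forall>e>0. \<exists>d>0. Q d \<subseteq> cball q e"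
  shows "Q 0 \<subseteq> {q}"
proof
  fix p assume "p \<in> Q 0"
  have "dist q p \<le> 0 + e" if "e > 0" for e
  proof -
    obtain d where "d > 0" "Q d \<subseteq> cball q e" using assms(2) \<open>e > 0\<close> by blast
    then show ?thesis using \<open>p \<in> Q 0\<close> monoD[OF assms(1), of 0 d] by auto
  qed
  then show "p \<in> {q}" using field_le_epsilon[of "dist q p" 0] by simp
qed

lemma norm_diff_le_far_rad:
  assumes "bounded F" and "y \<in> F"
  shows "norm (x - y) \<le> far_rad F x"
proof -
  obtain B where B: "\<forall>z\<in>F. norm z \<le> B" using assms(1) bounded_iff by blast
  have "bdd_above ((\<lambda>y. norm (x - y)) ` F)"
  proof (rule bdd_aboveI2)
    fix z assume "z \<in> F"
    then show "norm (x - z) \<le> norm x + B"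
      using B norm_triangle_ineq4[of x z] by fastforce
  qed
  then show ?thesis unfolding far_rad_def using assms(2) by (rule cSUP_upper2) simp
qed

lemma mono_farQ: "mono (farQ F x)"
  unfolding farQ_def by (rule monoI) auto

lemma farQ_subset: "farQ F x d \<subseteq> F"
  unfolding farQ_def by auto

lemma SUR_at_iff_farQ_shrinks:
  assumes "q \<in> farQ F x 0"
  shows "SUR_at F x \<longleftrightarrow> (\<forall>e>0. \<exists>d>0. farQ F x d \<subseteq> cball q e)"
proof
  assume "SUR_at F x"
  then obtain p where p: "farQ F x 0 = {p}"
    and small: "\<forall>e>0. \<exists>d>0. farQ F x d \<subseteq> set_thicken (farQ F x 0) e"
    unfolding SUR_at_def by blast
  from p assms have "farQ F x 0 = {q}" by auto
  with small show "\<forall>e>0. \<exists>d>0. farQ F x d \<subseteq> cball q e"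
    by (simp add: set_thicken_singleton)
next
  assume small: "\<forall>e>0. \<exists>d>0. farQ F x d \<subseteq> cball q e"
  with assms mono_family_shrinks_imp_subset_singleton[OF mono_farQ] have "farQ F x 0 = {q}"
    by blast
  with small show "SUR_at F x"
    unfolding SUR_at_def by (simp add: set_thicken_singleton)
qed

lemma maximizing_seq_iff_eventually_farQ:
  assumes "bounded F"
  shows "maximizing_seq F x y \<longleftrightarrow>
           (\<forall>n. y n \<in> F) \<and> (\<forall>d>0. \<forall>\<^sub>F n in sequentially. y n \<in> farQ F x d)"
proof (cases "\<forall>n. y n \<in> F")
  case True
  then have le: "norm (x - y n) \<le> far_rad F x" for n
    using norm_diff_le_far_rad[OF assms] by blast
  have "(\<lambda>n. norm (x - y n)) \<longlonglongrightarrow> far_rad F x \<longleftrightarrow>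
          (\<forall>d>0. \<forall>\<^sub>F n in sequentially. far_rad F x - d \<le> norm (x - y n))"
    unfolding tendsto_iff dist_real_def
  proof (intro iffI allI impI)
    fix d :: real assume "d > 0"
    assume "\<forall>d>0. \<forall>\<^sub>F n in sequentially. \<bar>norm (x - y n) - far_rad F x\<bar> < d"
    then have "\<forall>\<^sub>F n in sequentially. \<bar>norm (x - y n) - far_rad F x\<bar> < d" using \<open>d > 0\<close> by blast
    then show "\<forall>\<^sub>F n in sequentially. far_rad F x - d \<le> norm (x - y n)"
      by eventually_elim simp
  next
    fix d :: real assume "d > 0"
    assume "\<forall>d>0. \<forall>\<^sub>F n in sequentially. far_rad F x - d \<le> norm (x - y n)"
    then have "\<forall>\<^sub>F n in sequentially. far_rad F x - d / 2 \<le> norm (x - y n)" using \<open>d > 0\<close> by simp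
    then show "\<forall>\<^sub>F n in sequentially. \<bar>norm (x - y n) - far_rad F x\<bar> < d"
    proof eventually_elim
      case (elim n)
      with le[of n] \<open>d > 0\<close> show ?case by linarith
    qed
  qed
  then show ?thesis using True unfolding maximizing_seq_def farQ_def by simp
qed (auto simp: maximizing_seq_def)

lemma farQ_shrinks_iff_maximizing_seqs_tendsto:
  assumes "bounded F"
  shows "(\<forall>e>0. \<exists>d>0. farQ F x d \<subseteq> cball q e) \<longleftrightarrow> (\<forall>y. maximizing_seq F x y \<longrightarrow> y \<longlonglongrightarrow> q)"
proof
  assume small: "\<forall>e>0. \<exists>d>0. farQ F x d \<subseteq> cball q e"
  show "\<forall>y. maximizing_seq F x y \<longrightarrow> y \<longlonglongrightarrow> q"
  proof (intro allI impI)
    fix y assume "maximizing_seq F x y"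
    then have ev: "\<forall>\<^sub>F n in sequentially. y n \<in> farQ F x d" if "d > 0" for d
      using that maximizing_seq_iff_eventually_farQ[OF assms] by blast
    show "y \<longlonglongrightarrow> q" unfolding tendsto_iff
    proof (intro allI impI)
      fix e :: real assume "e > 0"
      then obtain d where "d > 0" "farQ F x d \<subseteq> cball q (e / 2)" using small by (meson half_gt_zero)
      from ev[OF \<open>d > 0\<close>] show "\<forall>\<^sub>F n in sequentially. dist (y n) q < e"
      proof eventually_elim
        case (elim n)
        with \<open>farQ F x d \<subseteq> cball q (e / 2)\<close> \<open>e > 0\<close> show ?case by (auto simp: dist_commute)
      qed
    qed
  qed
next
  assume tendsto: "\<forall>y. maximizing_seq F x y \<longrightarrow> y \<longlonglongrightarrow> q"
  show "\<forall>e>0. \<exists>d>0. farQ F x d \<subseteq> cball q e"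
  proof (rule ccontr)
    assume "\<not> ?thesis"
    then obtain e where "e > 0" and "\<forall>d>0. \<exists>y. y \<in> farQ F x d \<and> dist q y > e"
      by (auto simp: subset_iff not_le)
    then have "\<forall>n. \<exists>y. y \<in> farQ F x (inverse (real (Suc n))) \<and> dist q y > e" by simp
    then obtain c where c: "\<And>n. c n \<in> farQ F x (inverse (real (Suc n)))" "\<And>n. dist q (c n) > e"
      by metis
    have "\<forall>\<^sub>F n in sequentially. c n \<in> farQ F x d" if "d > 0" for d
    proof -
      from LIMSEQ_inverse_real_of_nat \<open>d > 0\<close>
      have "\<forall>\<^sub>F n in sequentially. inverse (real (Suc n)) < d" by (rule order_tendstoD)
      then show ?thesis
        by eventually_elim (use c(1) monoD[OF mono_farQ] in \<open>meson less_imp_le subsetD\<close>)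
    qed
    then have "maximizing_seq F x c"
      using c(1) farQ_subset maximizing_seq_iff_eventually_farQ[OF assms] by blast
    with tendsto have "\<forall>\<^sub>F n in sequentially. dist (c n) q < e"
      using \<open>e > 0\<close> tendsto_iff by blast
    then obtain n where "dist (c n) q < e"
      using eventually_happens'[OF trivial_limit_sequentially] by blast
    with c(2)[of n] show False by (simp add: dist_commute)
  qed
qed

definition interleave :: "(nat \<Rightarrow> 'a) \<Rightarrow> (nat \<Rightarrow> 'a) \<Rightarrow> nat \<Rightarrow> 'a" where
  "interleave y z n = (if even n then y (n div 2) else z (n div 2))"

lemma interleave_tendsto_iff:
  "interleave y z \<longlonglongrightarrow> L \<longleftrightarrow> y \<longlonglongrightarrow> L \<and> z \<longlonglongrightarrow> L"
proof
  assume lim: "interleave y z \<longlonglongrightarrow> L"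
  have "strict_mono (\<lambda>n::nat. 2 * n)" "strict_mono (\<lambda>n::nat. 2 * n + 1)"
    by (simp_all add: strict_mono_def)
  moreover have "interleave y z \<circ> (\<lambda>n. 2 * n) = y" "interleave y z \<circ> (\<lambda>n. 2 * n + 1) = z"
    by (simp_all add: interleave_def fun_eq_iff)
  ultimately show "y \<longlonglongrightarrow> L \<and> z \<longlonglongrightarrow> L"
    using LIMSEQ_subseq_LIMSEQ[OF lim] by metis
next
  assume lim: "y \<longlonglongrightarrow> L \<and> z \<longlonglongrightarrow> L"
  show "interleave y z \<longlonglongrightarrow> L"
  proof (rule topological_tendstoI)
    fix S assume "open S" "L \<in> S"
    with lim have "\<forall>\<^sub>F m in sequentially. y m \<in> S \<and> z m \<in> S"
      by (auto intro: eventually_conj topological_tendstoD)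
    then obtain N where N: "\<And>m. m \<ge> N \<Longrightarrow> y m \<in> S \<and> z m \<in> S"
      unfolding eventually_sequentially by blast
    have "interleave y z n \<in> S" if "n \<ge> 2 * N" for n
      using N[of "n div 2"] that by (auto simp: interleave_def)
    then show "\<forall>\<^sub>F n in sequentially. interleave y z n \<in> S"
      unfolding eventually_sequentially by blast
  qed
qed

lemma maximizing_seq_interleave:
  assumes "maximizing_seq F x y" and "maximizing_seq F x z"
  shows "maximizing_seq F x (interleave y z)"
proof -
  have "(\<lambda>n. norm (x - interleave y z n)) = interleave (\<lambda>n. norm (x - y n)) (\<lambda>n. norm (x - z n))"
    by (simp add: interleave_def fun_eq_iff)
  with assms show ?thesis
    unfolding maximizing_seq_def by (simp add: interleave_tendsto_iff interleave_def)
qed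

lemma maximizing_seqs_convergent_iff_tendsto:
  assumes "bounded F" and "q \<in> farQ F x 0"
  shows "(\<forall>y. maximizing_seq F x y \<longrightarrow> convergent y) \<longleftrightarrow> (\<forall>y. maximizing_seq F x y \<longrightarrow> y \<longlonglongrightarrow> q)"
proof (intro iffI allI impI)
  fix y assume conv: "\<forall>y. maximizing_seq F x y \<longrightarrow> convergent y" and "maximizing_seq F x y"
  have "maximizing_seq F x (\<lambda>_. q)"
    using assms monoD[OF mono_farQ, of 0] farQ_subset maximizing_seq_iff_eventually_farQ[OF assms(1)]
    by (metis (mono_tags, lifting) always_eventually less_imp_le subsetD)
  then obtain L where "interleave y (\<lambda>_. q) \<longlonglongrightarrow> L"
    using conv maximizing_seq_interleave[OF \<open>maximizing_seq F x y\<close>] unfolding convergent_def by blast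
  then show "y \<longlonglongrightarrow> q"
    unfolding interleave_tendsto_iff LIMSEQ_const_iff by simp
qed (auto simp: convergent_def)

theorem theorem2p6:
  fixes F :: "'a::banach set" and x :: 'a
  assumes "F \<noteq> {}" and "closed F" and "bounded F" and "farQ F x 0 \<noteq> {}"
  shows "((\<forall>y. maximizing_seq F x y \<longrightarrow> convergent y)
            \<longleftrightarrow> ((\<lambda>n. diameter (farQ F x (1 / real n))) \<longlonglongrightarrow> 0))
       \<and> (((\<lambda>n. diameter (farQ F x (1 / real n))) \<longlonglongrightarrow> 0)
            \<longleftrightarrow> ((\<exists>y. farQ F x 0 = {y}) \<and> vietoris_conv (\<lambda>n. farQ F x (1 / real n)) (farQ F x 0)))
       \<and> (((\<exists>y. farQ F x 0 = {y}) \<and> vietoris_conv (\<lambda>n. farQ F x (1 / real n)) (farQ F x 0))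
            \<longleftrightarrow> ((\<exists>y. farQ F x 0 = {y}) \<and> hausdorff_conv (\<lambda>n. farQ F x (1 / real n)) (farQ F x 0)))
       \<and> (((\<exists>y. farQ F x 0 = {y}) \<and> hausdorff_conv (\<lambda>n. farQ F x (1 / real n)) (farQ F x 0))
            \<longleftrightarrow> SUR_at F x)"
proof -
  obtain q where q: "q \<in> farQ F x 0" using assms(4) by blast
  define C where "C n = farQ F x (1 / real n)" for n
  have q_in_C: "q \<in> C n" for n
    using q monoD[OF mono_farQ, of 0 "1 / real n"] unfolding C_def by auto
  have bounded_C: "bounded (C n)" for n
    using bounded_subset[OF assms(3) farQ_subset] unfolding C_def .
  have SUR: "SUR_at F x \<longleftrightarrow> shrinks_to C q"
    using SUR_at_iff_farQ_shrinks[OF q] shrinks_to_mono_family_iff[of "farQ F x" q, OF mono_farQ]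
    unfolding C_def by simp
  have "(\<exists>y. farQ F x 0 = {y}) \<longleftrightarrow> farQ F x 0 = {q}" and "SUR_at F x \<Longrightarrow> farQ F x 0 = {q}"
    using q unfolding SUR_at_def by auto
  moreover note SUR maximizing_seqs_convergent_iff_tendsto[OF assms(3) q]
    farQ_shrinks_iff_maximizing_seqs_tendsto[OF assms(3)] SUR_at_iff_farQ_shrinks[OF q]
    diameter_tendsto_zero_iff_shrinks_to[OF q_in_C bounded_C]
    vietoris_conv_singleton_iff[OF q_in_C] hausdorff_conv_singleton_iff[OF q_in_C]
  ultimately show ?thesis unfolding C_def[symmetric] by auto
qed

end
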